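(* Let $0<s<1$, $N\ge1$, $m>N/2$, $\eta(x):=(1+|x|^2)^{-m/2}$, $R\ge R_0\ge1$, and let $\psi\in C^\infty(\mathbb R^N)$ with $0\le\psi\le1$, $\psi\equiv0$ on $B_1$, $\psi\equiv1$ on $\mathbb R^N\setminus B_2$. Define $\eta_R(x):=\eta(x/R)\psi(x/R_0)$ and $\rho_R(x):=\rho(\eta_R;x)$. Then there exists $C=C(N,s,m,R_0)>0$ such that $$\rho_R(x)\le\begin{cases}C\,\eta(x/R)^2|x|^{-N-2s}+2R^{-2s}\rho(\eta;x/R)&\text{if }|x|\ge3R_0,\\ C+2R^{-2s}\rho(\eta;x/R)&\text{if }|x|\le3R_0.\end{cases}$$
   Context: For suitable $\zeta$ (e.g. $\zeta\in W^{1,\infty}(\mathbb R^N)\cap H^1(\mathbb R^N)$), $\rho(\zeta;x):=\int_{\mathbb R^N}\frac{(\zeta(x)-\zeta(y))^2}{|x-y|^{N+2s}}dy$. $B_r=\{x\in\mathbb R^N:|x|<r\}$. *)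

theory Defs
  imports "HOL-Analysis.Analysis"
begin

text \<open>C-infinity functions on a Euclidean space: differentiable everywhere, with
  every partial derivative (along the standard basis) again C-infinity.\<close>
coinductive smooth_fun :: "('a::euclidean_space \<Rightarrow> real) \<Rightarrow> bool" where
  "f differentiable_on UNIV \<Longrightarrow>
   (\<forall>i\<in>Basis. smooth_fun (\<lambda>x. frechet_derivative f (at x) i)) \<Longrightarrow> smooth_fun f"

definition frac_rho :: "real \<Rightarrow> ('a::euclidean_space \<Rightarrow> real) \<Rightarrow> 'a \<Rightarrow> ennreal" where
  "frac_rho s \<zeta> x = (\<integral>\<^sup>+ y. ennreal ((\<zeta> x - \<zeta> y)\<^sup>2 / norm (x - y) powr (real DIM('a) + 2 * s)) \<partial>lborel)"

definition eta_fun :: "real \<Rightarrow> 'a::euclidean_space \<Rightarrow> real" where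
  "eta_fun m x = (1 + (norm x)\<^sup>2) powr (- m / 2)"

end

(* Write eta_R = a b with a(z) = eta(z/R) and b(z) = psi(z/R0).  For |b| <= 1 the elementary
   inequality (a(x) b(x) - a(y) b(y))^2 <= 2 a(x)^2 (b(x) - b(y))^2 + 2 (a(x) - a(y))^2 splits
   rho_R(x) into 2 a(x)^2 rho(b;x) + 2 rho(a;x), and scaling y = R z turns rho(a;x) into
   R^(-2s) rho(eta;x/R).  It remains to bound rho(b;x).  Being smooth and constant outside B_2,
   psi is Lipschitz, so (b(x) - b(y))^2 <= C min(|x-y|^2, 1), whose integral against
   |x-y|^(-N-2s) is finite by a dyadic decomposition into balls; this bounds rho(b;x) uniformly.
   For |x| >= 3 R0 the difference b(x) - b(y) vanishes unless |y| < 2 R0, where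
   |x - y| >= |x|/3, so rho(b;x) <= C |x|^(-N-2s). *)

theory Submission
  imports Defs
begin

lemma onorm_le_sum_Basis:
  fixes f :: "'a::euclidean_space \<Rightarrow> 'b::real_normed_vector"
  assumes "linear f"
  shows "onorm f \<le> (\<Sum>i\<in>Basis. norm (f i))"
proof (rule onorm_bound)
  show "0 \<le> (\<Sum>i\<in>Basis. norm (f i))" by (simp add: sum_nonneg)
  fix h :: 'a
  have "f h = (\<Sum>i\<in>Basis. (h \<bullet> i) *\<^sub>R f i)"
    using assms by (subst euclidean_representation[symmetric, of h]) (simp add: linear_sum linear_scale)
  also have "norm \<dots> \<le> (\<Sum>i\<in>Basis. \<bar>h \<bullet> i\<bar> * norm (f i))"
    by (rule norm_sum[THEN order_trans]) simp
  also have "\<dots> \<le> (\<Sum>i\<in>Basis. norm h * norm (f i))"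
    by (intro sum_mono mult_right_mono) (auto simp: Basis_le_norm)
  finally show "norm (f h) \<le> (\<Sum>i\<in>Basis. norm (f i)) * norm h"
    by (simp add: sum_distrib_left mult.commute)
qed

lemma smooth_funD:
  assumes "smooth_fun f"
  shows "f differentiable_on UNIV"
    and "i \<in> Basis \<Longrightarrow> smooth_fun (\<lambda>x. frechet_derivative f (at x) i)"
  using assms by (auto elim: smooth_fun.cases)

lemma smooth_fun_continuous_on: "smooth_fun f \<Longrightarrow> continuous_on UNIV f"
  by (rule differentiable_imp_continuous_on[OF smooth_funD(1)])

lemma borel_measurable_smooth_fun: "smooth_fun f \<Longrightarrow> f \<in> borel_measurable borel"
  by (rule borel_measurable_continuous_onI[OF smooth_fun_continuous_on])

lemma smooth_fun_lipschitz_if_constant_outside_ball: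
  fixes f :: "'a::euclidean_space \<Rightarrow> real"
  assumes f: "smooth_fun f" and const: "\<And>x. norm x \<ge> r \<Longrightarrow> f x = c"
  shows "\<exists>L. L-lipschitz_on UNIV f"
proof -
  define D where "D x = frechet_derivative f (at x)" for x
  have deriv: "(f has_derivative D x) (at x)" for x
    using smooth_funD(1)[OF f] unfolding D_def
    by (simp add: differentiable_on_def frechet_derivative_works)
  have D_vanishes: "D x = (\<lambda>_. 0)" if "norm x > r" for x
  proof -
    have "(f has_derivative (\<lambda>_. 0)) (at x)"
      by (rule has_derivative_transform_within_open[where f="\<lambda>_. c" and s="{x. norm x > r}"])
         (auto intro!: open_Collect_less continuous_intros that simp: const)
    then show ?thesis
      unfolding D_def by (rule frechet_derivative_at[symmetric])
  qed
  have "\<exists>B. \<forall>x. norm (D x i) \<le> B" if i: "i \<in> Basis" for i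
  proof -
    have "continuous_on UNIV (\<lambda>x. D x i)"
      using smooth_fun_continuous_on[OF smooth_funD(2)[OF f i]] by (simp add: D_def)
    then obtain B where "\<And>x. x \<in> cball 0 r \<Longrightarrow> norm (D x i) \<le> B" "0 \<le> B"
      by (metis continuous_on_compact_bound compact_cball continuous_on_subset subset_UNIV)
    then show ?thesis
      by (metis D_vanishes mem_cball_0 not_le norm_zero)
  qed
  then obtain B where B: "\<And>i x. i \<in> Basis \<Longrightarrow> norm (D x i) \<le> B i" by metis
  have "onorm (D x) \<le> (\<Sum>i\<in>Basis. B i)" for x
    using onorm_le_sum_Basis[OF has_derivative_linear[OF deriv]] B
    by (meson order_trans sum_mono)
  moreover have "0 \<le> (\<Sum>i\<in>Basis. B i)"
    using B[of _ 0] by (meson norm_ge_zero order_trans sum_nonneg)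
  ultimately show ?thesis
    by (blast intro: bounded_derivative_imp_lipschitz deriv)
qed

lemma ex_power2_le_less:
  fixes t :: real
  assumes "1 \<le> t"
  shows "\<exists>k. 2 ^ k \<le> t \<and> t < 2 ^ Suc k"
proof -
  define n where "n = nat \<lfloor>t\<rfloor>"
  have n: "real n \<le> t" "t < real n + 1" "1 \<le> n"
    using assms unfolding n_def by linarith+
  then obtain k where k: "2 ^ k \<le> n" "n < 2 ^ Suc k"
    using ex_power_ivl1[of 2 n] by auto
  have "(2::real) ^ k \<le> t"
    using k(1) n(1) by (metis of_nat_le_iff of_nat_numeral of_nat_power order_trans)
  moreover have "t < 2 ^ Suc k"
    using k(2) n(2) by (metis Suc_leI of_nat_Suc of_nat_le_iff of_nat_numeral of_nat_power
        order_less_le_trans add.commute)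
  ultimately show ?thesis by blast
qed

lemma ennreal_le_suminf: "(f :: nat \<Rightarrow> ennreal) k \<le> suminf f"
  using sum_le_suminf[of f "{k}"] by (simp add: summableI)

lemma ennreal_mult_le_ennreal_mult:
  assumes "0 \<le> c" "X \<le> ennreal K"
  shows "ennreal c * X \<le> ennreal (c * K)"
  using assms by (simp add: ennreal_mult' mult_left_mono)

lemma powr_le_dyadic:
  fixes t a :: real
  assumes "2 ^ k \<le> t" "t \<le> 2 ^ Suc k"
  shows "t powr a \<le> (1 + 2 powr a) * (2 powr a) ^ k"
proof -
  have pow: "(2 ^ n) powr a = (2 powr a) ^ n" for n
    by (simp add: powr_realpow[symmetric] powr_powr mult.commute)
  have "t powr a \<le> (2 ^ k) powr a + (2 ^ Suc k) powr a"
  proof (cases "0 \<le> a")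
    case True
    then show ?thesis using assms by (smt (verit) powr_ge_zero powr_mono2 zero_le_power)
  next
    case False
    then show ?thesis using assms by (smt (verit) powr_ge_zero powr_mono2' zero_less_power)
  qed
  then show ?thesis by (simp only: pow) (simp add: algebra_simps)
qed

lemma nn_integral_finite_if_le_suminf_cballs:
  fixes f :: "'a::euclidean_space \<Rightarrow> ennreal"
  assumes le: "\<And>y. f y \<le> (\<Sum>k. ennreal (c k) * indicator (cball 0 (r k)) y)"
    and summable: "summable (\<lambda>k. c k * r k ^ DIM('a))"
    and c: "\<And>k. 0 \<le> c k" and r: "\<And>k. 0 \<le> r k"
  shows "integral\<^sup>N lborel f < \<infinity>"
proof -
  define \<omega> where "\<omega> = unit_ball_vol (real DIM('a))"
  have "integral\<^sup>N lborel f \<le> (\<integral>\<^sup>+ y. (\<Sum>k. ennreal (c k) * indicator (cball (0::'a) (r k)) y) \<partial>lborel)"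
    by (intro nn_integral_mono le)
  also have "\<dots> = (\<Sum>k. ennreal (c k) * emeasure lborel (cball (0::'a) (r k)))"
    by (subst nn_integral_suminf)
       (auto intro!: borel_measurable_times_ennreal borel_measurable_indicator borel_closed
         simp: nn_integral_cmult_indicator)
  also have "\<dots> = (\<Sum>k. ennreal (\<omega> * (c k * r k ^ DIM('a))))"
    using c r by (simp add: emeasure_cball \<omega>_def ennreal_mult'[symmetric] mult_ac)
  also have "\<dots> = ennreal (\<Sum>k. \<omega> * (c k * r k ^ DIM('a)))"
    using c r summable by (intro suminf_ennreal2) (auto simp: \<omega>_def intro: summable_mult)
  finally show ?thesis by (simp add: order_le_less_trans)
qed

lemma nn_integral_norm_powr_outside_ball_finite:
  fixes p :: real
  assumes "real DIM('a::euclidean_space) < p"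
  shows "(\<integral>\<^sup>+ y. indicator (- ball (0::'a) 1) y * ennreal (norm y powr - p) \<partial>lborel) < \<infinity>"
proof -
  define c where "c k = (1 + 2 powr - p) * (2 powr - p) ^ k" for k :: nat
  have le: "indicator (- ball 0 1) y * ennreal (norm y powr - p)
      \<le> (\<Sum>k. ennreal (c k) * indicator (cball 0 (2 ^ Suc k)) y)" for y :: 'a
  proof (cases "norm y < 1")
    case False
    then obtain k where k: "2 ^ k \<le> norm y" "norm y < 2 ^ Suc k"
      using ex_power2_le_less by (meson not_less)
    then have "ennreal (norm y powr - p) \<le> ennreal (c k) * indicator (cball 0 (2 ^ Suc k)) y"
      by (auto simp: c_def powr_le_dyadic)
    also have "\<dots> \<le> (\<Sum>k. ennreal (c k) * indicator (cball 0 (2 ^ Suc k)) y)"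
      by (rule ennreal_le_suminf)
    finally show ?thesis using False by simp
  qed simp
  have "2 powr (real DIM('a) - p) < 1"
    using assms by (intro powr_less_one) auto
  moreover have "2 powr - p * 2 ^ DIM('a) = 2 powr (real DIM('a) - p)"
    by (simp add: powr_realpow[symmetric] powr_add[symmetric])
  ultimately have "summable (\<lambda>k. (1 + 2 powr - p) * 2 ^ DIM('a) * (2 powr - p * 2 ^ DIM('a)) ^ k)"
    by (simp add: summable_geometric summable_mult)
  moreover have "c k * (2 ^ Suc k) ^ DIM('a)
      = (1 + 2 powr - p) * 2 ^ DIM('a) * (2 powr - p * 2 ^ DIM('a)) ^ k" for k
    by (simp add: c_def power_mult_distrib flip: power_mult)
  ultimately have "summable (\<lambda>k. c k * (2 ^ Suc k) ^ DIM('a))"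
    by presburger
  then show ?thesis
    by (rule nn_integral_finite_if_le_suminf_cballs[OF le]) (simp_all add: c_def)
qed

lemma nn_integral_norm_powr_inside_ball_finite:
  fixes q :: real
  assumes "q < real DIM('a::euclidean_space)"
  shows "(\<integral>\<^sup>+ y. indicator (ball (0::'a) 1) y * ennreal (norm y powr - q) \<partial>lborel) < \<infinity>"
proof -
  define c where "c k = (1 + 2 powr q) * (2 powr q) ^ k" for k :: nat
  have le: "indicator (ball 0 1) y * ennreal (norm y powr - q)
      \<le> (\<Sum>k. ennreal (c k) * indicator (cball 0 ((1 / 2) ^ k)) y)" for y :: 'a
  proof (cases "0 < norm y \<and> norm y < 1")
    case True
    then obtain k where k: "2 ^ k \<le> 1 / norm y" "1 / norm y < 2 ^ Suc k"
      using ex_power2_le_less[of "1 / norm y"] by auto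
    have "norm y powr - q = (1 / norm y) powr q"
      using True by (simp add: powr_minus_divide powr_divide)
    also have "\<dots> \<le> c k"
      using k by (simp add: c_def powr_le_dyadic)
    finally have "ennreal (norm y powr - q) \<le> ennreal (c k) * indicator (cball 0 ((1 / 2) ^ k)) y"
      using k True by (auto simp: field_simps power_divide intro: ennreal_leI)
    also have "\<dots> \<le> (\<Sum>k. ennreal (c k) * indicator (cball 0 ((1 / 2) ^ k)) y)"
      by (rule ennreal_le_suminf)
    finally show ?thesis using True by simp
  next
    case False
    then have "indicator (ball 0 1) y * ennreal (norm y powr - q) = 0"
      by (cases "y = 0") (auto simp: indicator_def)
    then show ?thesis by (metis zero_le)
  qed
  have "2 powr (q - real DIM('a)) < 1"
    using assms by (intro powr_less_one) auto
  moreover have "2 powr q / 2 ^ DIM('a) = 2 powr (q - real DIM('a))"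
    by (simp add: powr_realpow[symmetric] powr_diff[symmetric])
  ultimately have "summable (\<lambda>k. (1 + 2 powr q) * (2 powr q / 2 ^ DIM('a)) ^ k)"
    by (simp add: summable_geometric summable_mult)
  moreover have "c k * ((1 / 2) ^ k) ^ DIM('a) = (1 + 2 powr q) * (2 powr q / 2 ^ DIM('a)) ^ k" for k
    by (simp add: c_def power_divide flip: power_mult)
  ultimately have "summable (\<lambda>k. c k * ((1 / 2) ^ k) ^ DIM('a))"
    by presburger
  then show ?thesis
    by (rule nn_integral_finite_if_le_suminf_cballs[OF le]) (simp_all add: c_def)
qed

lemma nn_integral_truncated_kernel_finite:
  fixes s :: real
  assumes "0 < s" "s < 1"
  shows "(\<integral>\<^sup>+ y. ennreal (min ((norm y)\<^sup>2) 1 / norm y powr (real DIM('a) + 2 * s))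
    \<partial>(lborel :: 'a::euclidean_space measure)) < \<infinity>"
proof -
  define p where "p = real DIM('a) + 2 * s"
  have split: "ennreal (min ((norm y)\<^sup>2) 1 / norm y powr p)
      \<le> indicator (- ball 0 1) y * ennreal (norm y powr - p)
        + indicator (ball 0 1) y * ennreal (norm y powr - (p - 2))" for y :: 'a
  proof (cases "norm y < 1")
    case True
    show ?thesis
    proof (cases "y = 0")
      case False
      have "min ((norm y)\<^sup>2) 1 = (norm y)\<^sup>2"
        using True by (simp add: power_le_one)
      moreover have "norm y powr - (p - 2) = norm y powr 2 / norm y powr p"
        by (simp only: minus_diff_eq powr_diff)
      ultimately show ?thesis using True False by simp
    qed simp
  next
    case False
    then show ?thesis by (simp add: powr_minus_divide)
  qed
  have "(\<integral>\<^sup>+ y. ennreal (min ((norm (y::'a))\<^sup>2) 1 / norm y powr p) \<partial>lborel)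
      \<le> (\<integral>\<^sup>+ y. indicator (- ball (0::'a) 1) y * ennreal (norm y powr - p)
            + indicator (ball 0 1) y * ennreal (norm y powr - (p - 2)) \<partial>lborel)"
    by (intro nn_integral_mono split)
  also have "\<dots> = (\<integral>\<^sup>+ y. indicator (- ball (0::'a) 1) y * ennreal (norm y powr - p) \<partial>lborel)
      + (\<integral>\<^sup>+ y. indicator (ball (0::'a) 1) y * ennreal (norm y powr - (p - 2)) \<partial>lborel)"
    by (rule nn_integral_add) (measurable, simp_all add: borel_open borel_closed)
  also have "\<dots> < \<infinity>"
    using nn_integral_norm_powr_outside_ball_finite[of p, where 'a='a]
      nn_integral_norm_powr_inside_ball_finite[of "p - 2", where 'a='a] assms
    by (simp add: p_def)
  finally show ?thesis unfolding p_def .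
qed

lemma nn_integral_lborel_reflect:
  fixes f :: "'a::euclidean_space \<Rightarrow> ennreal"
  assumes [measurable]: "f \<in> borel_measurable borel"
  shows "(\<integral>\<^sup>+ y. f (x - y) \<partial>lborel) = (\<integral>\<^sup>+ y. f y \<partial>lborel)"
  by (subst lborel_affine[of "-1" x])
     (simp_all add: nn_integral_density nn_integral_distr density_1)

lemma frac_rho_uniformly_bounded_if_lipschitz:
  fixes f :: "'a::euclidean_space \<Rightarrow> real"
  assumes "0 < s" "s < 1" and lip: "L-lipschitz_on UNIV f" and bnd: "\<And>x. \<bar>f x\<bar> \<le> M"
  shows "\<exists>K. \<forall>x. frac_rho s f x \<le> ennreal K"
proof -
  define p where "p = real DIM('a) + 2 * s"
  define B where "B = max (L\<^sup>2) (4 * M\<^sup>2)"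
  have B_nonneg: "0 \<le> B" unfolding B_def by (simp add: le_max_iff_disj)
  define \<kappa> where "\<kappa> y = ennreal (min ((norm y)\<^sup>2) 1 / norm y powr p)" for y :: 'a
  have [measurable]: "\<kappa> \<in> borel_measurable borel" unfolding \<kappa>_def by measurable
  have finite: "integral\<^sup>N lborel \<kappa> < \<infinity>"
    using nn_integral_truncated_kernel_finite[OF assms(1,2), where 'a='a]
    unfolding \<kappa>_def[abs_def] p_def .
  have "frac_rho s f x \<le> ennreal B * integral\<^sup>N lborel \<kappa>" for x
  proof -
    have "(f x - f y)\<^sup>2 \<le> B * min ((norm (x - y))\<^sup>2) 1" for y
    proof -
      have "\<bar>f x - f y\<bar> \<le> L * norm (x - y)"
        using lipschitz_on_normD[OF lip] by simp
      then have "(f x - f y)\<^sup>2 \<le> L\<^sup>2 * (norm (x - y))\<^sup>2"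
        by (metis abs_ge_zero power2_abs power_mono power_mult_distrib)
      moreover have "\<bar>f x - f y\<bar> \<le> 2 * M"
        using bnd[of x] bnd[of y] by linarith
      then have "(f x - f y)\<^sup>2 \<le> 4 * M\<^sup>2"
        by (metis abs_ge_zero power2_abs power_mono power_mult_distrib numeral_times_numeral
            num_double power2_eq_square)
      moreover have "L\<^sup>2 \<le> B" "4 * M\<^sup>2 \<le> B"
        unfolding B_def by auto
      ultimately show ?thesis
        by (cases "(norm (x - y))\<^sup>2 \<le> 1")
           (auto simp: min_def intro: order_trans[OF _ mult_right_mono])
    qed
    then have "(f x - f y)\<^sup>2 / norm (x - y) powr p
        \<le> B * (min ((norm (x - y))\<^sup>2) 1 / norm (x - y) powr p)" for y
      by (metis divide_right_mono powr_ge_zero times_divide_eq_right)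
    then have "frac_rho s f x \<le> (\<integral>\<^sup>+ y. ennreal B * \<kappa> (x - y) \<partial>lborel)"
      unfolding frac_rho_def \<kappa>_def p_def
      using B_nonneg by (intro nn_integral_mono) (simp add: ennreal_mult[symmetric] ennreal_leI)
    also have "\<dots> = ennreal B * (\<integral>\<^sup>+ y. \<kappa> (x - y) \<partial>lborel)"
      by (rule nn_integral_cmult) measurable
    finally show ?thesis
      by (simp add: nn_integral_lborel_reflect)
  qed
  moreover have "ennreal B * integral\<^sup>N lborel \<kappa> = ennreal (B * enn2real (integral\<^sup>N lborel \<kappa>))"
    using finite B_nonneg by (simp add: ennreal_mult ennreal_enn2real)
  ultimately show ?thesis by metis
qed

lemma frac_rho_rescale:
  fixes f :: "'a::euclidean_space \<Rightarrow> real"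
  assumes [measurable]: "f \<in> borel_measurable borel" and R: "0 < R"
  shows "frac_rho s (\<lambda>z. f (z /\<^sub>R R)) x = ennreal (R powr (- 2 * s)) * frac_rho s f (x /\<^sub>R R)"
proof -
  define p where "p = real DIM('a) + 2 * s"
  define g where "g y = ennreal ((f (x /\<^sub>R R) - f (y /\<^sub>R R))\<^sup>2 / norm (x - y) powr p)" for y
  have [measurable]: "g \<in> borel_measurable borel" unfolding g_def by measurable
  have "frac_rho s (\<lambda>z. f (z /\<^sub>R R)) x = integral\<^sup>N lborel g"
    unfolding frac_rho_def g_def[abs_def] p_def ..
  also have "\<dots> = (\<integral>\<^sup>+ z. ennreal (R ^ DIM('a)) * g (R *\<^sub>R z) \<partial>lborel)"
    using R by (subst lborel_affine[of R 0]) (simp_all add: nn_integral_density nn_integral_distr)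
  also have "\<dots> = (\<integral>\<^sup>+ z. ennreal (R powr (- 2 * s))
      * ennreal ((f (x /\<^sub>R R) - f z)\<^sup>2 / norm (x /\<^sub>R R - z) powr p) \<partial>lborel)"
  proof (intro nn_integral_cong)
    fix z :: 'a
    have "norm (x - R *\<^sub>R z) = R * norm (x /\<^sub>R R - z)"
      using R by (metis abs_of_pos norm_scaleR scaleR_right_diff_distrib
          divideR_right less_irrefl)
    moreover have "R ^ DIM('a) / R powr p = R powr (- 2 * s)"
      using R by (simp add: p_def powr_realpow[symmetric] powr_diff[symmetric])
    ultimately have "R ^ DIM('a) * ((f (x /\<^sub>R R) - f z)\<^sup>2 / norm (x - R *\<^sub>R z) powr p)
        = R powr (- 2 * s) * ((f (x /\<^sub>R R) - f z)\<^sup>2 / norm (x /\<^sub>R R - z) powr p)"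
      using R by (simp add: powr_mult field_simps)
    then show "ennreal (R ^ DIM('a)) * g (R *\<^sub>R z) = ennreal (R powr (- 2 * s))
        * ennreal ((f (x /\<^sub>R R) - f z)\<^sup>2 / norm (x /\<^sub>R R - z) powr p)"
      using R by (simp add: g_def ennreal_mult[symmetric])
  qed
  also have "\<dots> = ennreal (R powr (- 2 * s)) * frac_rho s f (x /\<^sub>R R)"
    unfolding frac_rho_def p_def by (rule nn_integral_cmult) measurable
  finally show ?thesis .
qed

lemma square_mult_diff_le:
  fixes a a' b b' :: real
  assumes "\<bar>b'\<bar> \<le> 1"
  shows "(a * b - a' * b')\<^sup>2 \<le> 2 * a\<^sup>2 * (b - b')\<^sup>2 + 2 * (a - a')\<^sup>2"
proof -
  have square_sum: "(u + v)\<^sup>2 \<le> 2 * u\<^sup>2 + 2 * v\<^sup>2" for u v :: real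
    using sum_squares_ge_zero[of "u - v" 0] by (simp add: power2_eq_square algebra_simps)
  have "(a * b - a' * b')\<^sup>2 = (a * (b - b') + b' * (a - a'))\<^sup>2"
    by (simp add: algebra_simps)
  also have "\<dots> \<le> 2 * (a * (b - b'))\<^sup>2 + 2 * (b' * (a - a'))\<^sup>2"
    by (rule square_sum)
  also have "(b' * (a - a'))\<^sup>2 \<le> (a - a')\<^sup>2"
    using assms by (simp add: power_mult_distrib abs_square_le_1 mult_left_le_one_le)
  finally show ?thesis
    by (simp add: power_mult_distrib)
qed

lemma frac_rho_mult_le:
  fixes a b :: "'a::euclidean_space \<Rightarrow> real"
  assumes [measurable]: "a \<in> borel_measurable borel" "b \<in> borel_measurable borel"
    and b: "\<And>y. \<bar>b y\<bar> \<le> 1"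
  shows "frac_rho s (\<lambda>z. a z * b z) x
    \<le> ennreal (2 * (a x)\<^sup>2) * frac_rho s b x + 2 * frac_rho s a x"
proof -
  define p where "p = real DIM('a) + 2 * s"
  define G where "G y = (b x - b y)\<^sup>2 / norm (x - y) powr p" for y
  define H where "H y = (a x - a y)\<^sup>2 / norm (x - y) powr p" for y
  have G_nonneg: "0 \<le> G y" and H_nonneg: "0 \<le> H y" for y
    by (simp_all add: G_def H_def)
  have pointwise: "(a x * b x - a y * b y)\<^sup>2 / norm (x - y) powr p \<le> 2 * (a x)\<^sup>2 * G y + 2 * H y"
    for y
  proof -
    have "(a x * b x - a y * b y)\<^sup>2 \<le> 2 * (a x)\<^sup>2 * (b x - b y)\<^sup>2 + 2 * (a x - a y)\<^sup>2"
      using b by (rule square_mult_diff_le)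
    then show ?thesis
      unfolding G_def H_def by (simp add: divide_right_mono flip: add_divide_distrib)
  qed
  have "frac_rho s (\<lambda>z. a z * b z) x
      \<le> (\<integral>\<^sup>+ y. ennreal (2 * (a x)\<^sup>2) * ennreal (G y) + 2 * ennreal (H y) \<partial>lborel)"
    unfolding frac_rho_def p_def[symmetric]
  proof (intro nn_integral_mono)
    fix y
    have "ennreal ((a x * b x - a y * b y)\<^sup>2 / norm (x - y) powr p)
        \<le> ennreal (2 * (a x)\<^sup>2 * G y + 2 * H y)"
      by (rule ennreal_leI) (rule pointwise)
    also have "\<dots> = ennreal (2 * (a x)\<^sup>2) * ennreal (G y) + 2 * ennreal (H y)"
      using G_nonneg[of y] H_nonneg[of y] by (simp add: ennreal_mult' ennreal_plus)
    finally show "ennreal ((a x * b x - a y * b y)\<^sup>2 / norm (x - y) powr p)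
        \<le> ennreal (2 * (a x)\<^sup>2) * ennreal (G y) + 2 * ennreal (H y)" .
  qed
  also have "\<dots> = (\<integral>\<^sup>+ y. ennreal (2 * (a x)\<^sup>2) * ennreal (G y) \<partial>lborel)
      + (\<integral>\<^sup>+ y. 2 * ennreal (H y) \<partial>lborel)"
    by (rule nn_integral_add) (simp_all add: G_def H_def)
  also have "\<dots> = ennreal (2 * (a x)\<^sup>2) * (\<integral>\<^sup>+ y. ennreal (G y) \<partial>lborel)
      + 2 * (\<integral>\<^sup>+ y. ennreal (H y) \<partial>lborel)"
    by (intro arg_cong2[where f="(+)"] nn_integral_cmult) (simp_all add: G_def H_def)
  finally show ?thesis
    unfolding frac_rho_def G_def H_def p_def .
qed

lemma frac_rho_rescaled_mult_le:
  fixes g b :: "'a::euclidean_space \<Rightarrow> real"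
  assumes [measurable]: "g \<in> borel_measurable borel" "b \<in> borel_measurable borel"
    and "\<And>y. \<bar>b y\<bar> \<le> 1" "0 < R"
  shows "frac_rho s (\<lambda>z. g (z /\<^sub>R R) * b z) x
    \<le> ennreal (2 * (g (x /\<^sub>R R))\<^sup>2) * frac_rho s b x
      + 2 * ennreal (R powr (- 2 * s)) * frac_rho s g (x /\<^sub>R R)"
  using frac_rho_mult_le[of "\<lambda>z. g (z /\<^sub>R R)" b s x] frac_rho_rescale[of g R s x] assms
  by (simp add: mult.assoc)

lemma frac_rho_le_if_constant_outside_ball:
  fixes f :: "'a::euclidean_space \<Rightarrow> real"
  assumes "0 \<le> s" "0 < r"
    and const: "\<And>y. r \<le> norm y \<Longrightarrow> f y = c" and osc: "\<And>y. \<bar>f y - c\<bar> \<le> 1"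
    and x: "3 * r \<le> 2 * norm x"
  shows "frac_rho s f x \<le> ennreal (3 powr (real DIM('a) + 2 * s) * unit_ball_vol (real DIM('a))
      * r ^ DIM('a) * norm x powr (- real DIM('a) - 2 * s))"
proof -
  define p where "p = real DIM('a) + 2 * s"
  define c' where "c' = 3 powr p * norm x powr - p"
  have "0 < p" using assms(1) by (simp add: p_def add_pos_nonneg)
  have "f x = c" using x \<open>0 < r\<close> by (intro const) linarith
  have "ennreal ((f x - f y)\<^sup>2 / norm (x - y) powr p) \<le> ennreal c' * indicator (cball 0 r) y" for y
  proof (cases "norm y \<le> r")
    case True
    have "norm x / 3 \<le> norm (x - y)"
      using norm_triangle_ineq2[of x y] True x by linarith
    moreover have "0 < norm x / 3" using x \<open>0 < r\<close> by linarith
    moreover have "(f x - f y)\<^sup>2 \<le> 1"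
      using osc[of y] \<open>f x = c\<close> by (simp add: abs_square_le_1 abs_minus_commute)
    ultimately have "(f x - f y)\<^sup>2 / norm (x - y) powr p \<le> (norm x / 3) powr - p"
      using \<open>0 < p\<close> by (auto simp: powr_minus_divide intro!: frac_le powr_mono2)
    also have "\<dots> = c'"
      by (simp add: c'_def powr_divide powr_minus_divide)
    finally show ?thesis using True by (simp add: ennreal_leI)
  next
    case False
    then show ?thesis using const[of y] \<open>f x = c\<close> by simp
  qed
  then have "frac_rho s f x \<le> (\<integral>\<^sup>+ y. ennreal c' * indicator (cball (0::'a) r) y \<partial>lborel)"
    unfolding frac_rho_def p_def by (intro nn_integral_mono)
  also have "\<dots> = ennreal (c' * (unit_ball_vol (real DIM('a)) * r ^ DIM('a)))"
    using \<open>0 < r\<close> by (simp add: nn_integral_cmult_indicator emeasure_cball ennreal_mult c'_def)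
  finally show ?thesis
    by (simp add: c'_def p_def mult_ac)
qed

lemma frac_rho_cutoff_bounds:
  fixes \<psi> :: "'a::euclidean_space \<Rightarrow> real"
  assumes "0 < s" "s < 1" "1 \<le> R0" and \<psi>: "smooth_fun \<psi>" "\<And>x. 0 \<le> \<psi> x" "\<And>x. \<psi> x \<le> 1"
    and \<psi>_one: "\<And>x. norm x \<ge> 2 \<Longrightarrow> \<psi> x = 1"
  shows "\<exists>K\<ge>0. \<forall>x. frac_rho s (\<lambda>z. \<psi> (z /\<^sub>R R0)) x \<le> ennreal K \<and>
    (3 * R0 \<le> norm x \<longrightarrow>
       frac_rho s (\<lambda>z. \<psi> (z /\<^sub>R R0)) x \<le> ennreal (K * norm x powr (- real DIM('a) - 2 * s)))"
proof -
  note borel_measurable_smooth_fun[OF \<psi>(1), measurable]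
  obtain L where "L-lipschitz_on UNIV \<psi>"
    using smooth_fun_lipschitz_if_constant_outside_ball[OF \<psi>(1) \<psi>_one] by blast
  moreover have "\<bar>\<psi> x\<bar> \<le> 1" for x using \<psi>(2,3)[of x] by simp
  ultimately obtain K where K: "\<And>x. frac_rho s \<psi> x \<le> ennreal K"
    using frac_rho_uniformly_bounded_if_lipschitz[OF assms(1,2)] by metis
  define K' where "K' = 3 powr (real DIM('a) + 2 * s) * unit_ball_vol (real DIM('a)) * (2 * R0) ^ DIM('a)"
  define C where "C = max (max K 0) K'"
  have near: "frac_rho s (\<lambda>z. \<psi> (z /\<^sub>R R0)) x \<le> ennreal C" for x
  proof -
    have "frac_rho s (\<lambda>z. \<psi> (z /\<^sub>R R0)) x = ennreal (R0 powr (- 2 * s)) * frac_rho s \<psi> (x /\<^sub>R R0)"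
      using assms(3) by (intro frac_rho_rescale) auto
    also have "\<dots> \<le> 1 * ennreal C"
    proof (intro mult_mono)
      have "R0 powr (- 2 * s) \<le> R0 powr 0"
        using assms(1,3) by (intro powr_mono) auto
      then show "ennreal (R0 powr (- 2 * s)) \<le> 1"
        using assms(3) by (simp add: ennreal_le_1)
      show "frac_rho s \<psi> (x /\<^sub>R R0) \<le> ennreal C"
        using K[of "x /\<^sub>R R0"] by (rule order_trans) (simp add: C_def)
    qed simp_all
    finally show ?thesis by simp
  qed
  have far: "frac_rho s (\<lambda>z. \<psi> (z /\<^sub>R R0)) x \<le> ennreal (C * norm x powr (- real DIM('a) - 2 * s))"
    if "3 * R0 \<le> norm x" for x
  proof -
    have "frac_rho s (\<lambda>z. \<psi> (z /\<^sub>R R0)) x \<le> ennreal (K' * norm x powr (- real DIM('a) - 2 * s))"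
      unfolding K'_def mult.assoc[symmetric]
    proof (rule frac_rho_le_if_constant_outside_ball[where c = 1])
      show "\<psi> (y /\<^sub>R R0) = 1" if "2 * R0 \<le> norm y" for y
        using that assms(3) by (intro \<psi>_one) (simp add: field_simps)
      show "\<bar>\<psi> (y /\<^sub>R R0) - 1\<bar> \<le> 1" for y
        using \<psi>(2,3)[of "y /\<^sub>R R0"] by simp
    qed (use assms that in auto)
    also have "\<dots> \<le> ennreal (C * norm x powr (- real DIM('a) - 2 * s))"
      by (intro ennreal_leI mult_right_mono) (simp_all add: C_def)
    finally show ?thesis .
  qed
  have "0 \<le> C" by (simp add: C_def)
  with near far show ?thesis by blast
qed

lemma eta_fun_nonneg: "0 \<le> eta_fun m x"
  by (simp add: eta_fun_def)

lemma eta_fun_le_one: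
  assumes "0 \<le> m"
  shows "eta_fun m x \<le> 1"
proof -
  have "(1 + (norm x)\<^sup>2) powr (- m / 2) \<le> (1 + (norm x)\<^sup>2) powr 0"
    using assms by (intro powr_mono) auto
  then show ?thesis by (simp add: eta_fun_def add_nonneg_eq_0_iff)
qed

lemma borel_measurable_eta_fun [measurable]: "eta_fun m \<in> borel_measurable borel"
  unfolding eta_fun_def by measurable

theorem lemma2p5:
  fixes s m R0 :: real and \<psi> :: "'a::euclidean_space \<Rightarrow> real"
  assumes "0 < s" "s < 1"
    and "m > real DIM('a) / 2"
    and "R0 \<ge> 1"
    and "smooth_fun \<psi>"
    and "\<And>x. 0 \<le> \<psi> x" "\<And>x. \<psi> x \<le> 1"
    and "\<And>x. norm x < 1 \<Longrightarrow> \<psi> x = 0"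
    and "\<And>x. norm x \<ge> 2 \<Longrightarrow> \<psi> x = 1"
  shows "\<exists>C>0. \<forall>R x. R \<ge> R0 \<longrightarrow>
     (let \<eta>R = (\<lambda>z. eta_fun m (z /\<^sub>R R) * \<psi> (z /\<^sub>R R0)) in
       (norm x \<ge> 3 * R0 \<longrightarrow>
          frac_rho s \<eta>R x \<le> ennreal (C * (eta_fun m (x /\<^sub>R R))\<^sup>2 * norm x powr (- real DIM('a) - 2 * s))
                             + 2 * ennreal (R powr (- 2 * s)) * frac_rho s (eta_fun m) (x /\<^sub>R R)) \<and>
       (norm x \<le> 3 * R0 \<longrightarrow>
          frac_rho s \<eta>R x \<le> ennreal C + 2 * ennreal (R powr (- 2 * s)) * frac_rho s (eta_fun m) (x /\<^sub>R R)))"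
proof -
  have "0 \<le> m" using assms(3) by (smt (verit) divide_nonneg_nonneg of_nat_0_le_iff)
  then have eta_sq_le: "(eta_fun m y)\<^sup>2 \<le> 1" for y :: 'a
    using eta_fun_nonneg[of m y] eta_fun_le_one[of m y] by (simp add: abs_square_le_1)
  obtain K where "0 \<le> K" and K: "\<And>x. frac_rho s (\<lambda>z. \<psi> (z /\<^sub>R R0)) x \<le> ennreal K"
    and K_far: "\<And>x. 3 * R0 \<le> norm x \<Longrightarrow>
      frac_rho s (\<lambda>z. \<psi> (z /\<^sub>R R0)) x \<le> ennreal (K * norm x powr (- real DIM('a) - 2 * s))"
    using frac_rho_cutoff_bounds[OF assms(1,2,4,5,6,7,9)] by blast
  note borel_measurable_smooth_fun[OF assms(5), measurable]
  have split: "frac_rho s (\<lambda>z. eta_fun m (z /\<^sub>R R) * \<psi> (z /\<^sub>R R0)) x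
      \<le> ennreal (2 * (eta_fun m (x /\<^sub>R R))\<^sup>2) * frac_rho s (\<lambda>z. \<psi> (z /\<^sub>R R0)) x
        + 2 * ennreal (R powr (- 2 * s)) * frac_rho s (eta_fun m) (x /\<^sub>R R)" if "R0 \<le> R" for R x
    using that assms(4,6,7) by (intro frac_rho_rescaled_mult_le) auto
  have near: "ennreal (2 * (eta_fun m (x /\<^sub>R R))\<^sup>2) * frac_rho s (\<lambda>z. \<psi> (z /\<^sub>R R0)) x
      \<le> ennreal (2 * K + 1)" for R x
  proof (rule order_trans[OF ennreal_mult_le_ennreal_mult[OF _ K]])
    show "ennreal (2 * (eta_fun m (x /\<^sub>R R))\<^sup>2 * K) \<le> ennreal (2 * K + 1)"
      using eta_sq_le[of "x /\<^sub>R R"] \<open>0 \<le> K\<close> mult_left_le_one_le[of K "(eta_fun m (x /\<^sub>R R))\<^sup>2"]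
      by (intro ennreal_leI) simp
  qed simp
  have far: "ennreal (2 * (eta_fun m (x /\<^sub>R R))\<^sup>2) * frac_rho s (\<lambda>z. \<psi> (z /\<^sub>R R0)) x
      \<le> ennreal ((2 * K + 1) * (eta_fun m (x /\<^sub>R R))\<^sup>2 * norm x powr (- real DIM('a) - 2 * s))"
    if "3 * R0 \<le> norm x" for R x
  proof (rule order_trans[OF ennreal_mult_le_ennreal_mult[OF _ K_far[OF that]]])
    show "ennreal (2 * (eta_fun m (x /\<^sub>R R))\<^sup>2 * (K * norm x powr (- real DIM('a) - 2 * s)))
        \<le> ennreal ((2 * K + 1) * (eta_fun m (x /\<^sub>R R))\<^sup>2 * norm x powr (- real DIM('a) - 2 * s))"
      by (intro ennreal_leI) (simp add: algebra_simps)
  qed simp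
  show ?thesis
    unfolding Let_def
  proof (intro exI[of _ "2 * K + 1"] conjI allI impI)
    show "0 < 2 * K + 1" using \<open>0 \<le> K\<close> by simp
  qed (rule order_trans[OF split add_right_mono]; simp add: near far)+
qed

end
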